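(* Let $\mathbb G=V_1\times V_2$ be a step-two Carnot group of rank $r$, let $n\geq r$ be an integer and $\pi:\mathbb F_n\to\mathbb G$ a surjective Carnot morphism. Then the real vector spaces $\mathcal A(V_1\times V_2)$ and $\oplus_{k=n-2}^n\Lambda^k(\pi)$ are isomorphic.
   Context: A step-two Carnot group is $\mathbb G=V_1\times V_2$ ($V_1,V_2$ finite-dimensional real vector spaces, $V_2\ne\{0\}$) with a bilinear skew-symmetric $[\cdot,\cdot]:V_1\times V_1\to V_2$ whose image spans $V_2$, and group law $(x,z)\cdot(x',z')=(x+x',z+z'+[x,x'])$; its rank is $\dim V_1$. $\mathcal A(V_1\times V_2)$ is the space of real-valued maps affine in the usual sense on the vector space $V_1\times V_2$. $\mathbb F_n=\Lambda^1(\mathbb R^n)\times\Lambda^2(\mathbb R^n)$ with bracket $[\theta,\theta']=\theta\wedge\theta'$. A Carnot morphism $\pi:\mathbb G\to\mathbb G'$ is $\pi(x,z)=(\pi_1(x),\pi_2(z))$ with $\pi_1,\pi_2$ linear and $\pi_2([x,y])=[\pi_1(x),\pi_1(y)]'$. For $\eta\in\Lambda^k(\mathbb R^n)$, $\operatorname{Anh}^{1,2}_\wedge\eta:=\{(\theta,\omega)\in\mathbb F_n:\theta\wedge\eta=0,\ \omega\wedge\eta=0\}$ and $\Lambda^k(\pi):=\{\eta\in\Lambda^k(\mathbb R^n):\ker\pi\subset\operatorname{Anh}^{1,2}_\wedge\eta\}$. *)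

theory Defs
  imports "HOL-Analysis.Analysis"
begin

text \<open>Exterior algebra of R^n, with n = CARD('n) and the standard basis of (R^n)^*
indexed by the elements of the finite linearly ordered type 'n.  A form is the vector of
its coefficients in the basis e_I = e_{i_1} wedge ... wedge e_{i_k} (i_1 < ... < i_k),
indexed by the subset I.\<close>

type_synonym 'n form = "real ^ ('n set)"

definition shuffle_sign :: "'n::linorder set \<Rightarrow> 'n set \<Rightarrow> real" where
  "shuffle_sign I J = (-1) ^ card {(i, j). i \<in> I \<and> j \<in> J \<and> j < i}"

definition wedge :: "('n::{finite,linorder}) form \<Rightarrow> 'n form \<Rightarrow> 'n form" (infixr "\<and>\<^sub>w" 70) where
  "wedge \<alpha> \<beta> = (\<chi> S. \<Sum>I\<in>Pow S. shuffle_sign I (S - I) * (\<alpha> $ I) * (\<beta> $ (S - I)))"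

definition Lam :: "nat \<Rightarrow> ('n::{finite,linorder}) form set" where
  "Lam k = {\<eta>. \<forall>S. card S \<noteq> k \<longrightarrow> \<eta> $ S = 0}"

text \<open>Step-two Carnot group V1 x V2 given by a bracket.\<close>
definition step2_bracket :: "('a::euclidean_space \<Rightarrow> 'a \<Rightarrow> 'b::euclidean_space) \<Rightarrow> bool" where
  "step2_bracket br \<longleftrightarrow> bilinear br \<and> (\<forall>x y. br x y = - br y x)
     \<and> span (range (\<lambda>(x, y). br x y)) = UNIV"

text \<open>Carnot morphism F_n \<rightarrow> G, (theta, omega) \<mapsto> (pi1 theta, pi2 omega).
The linear components are given as linear maps on the ambient coefficient space; only
their restrictions to Lambda^1 and Lambda^2 matter.\<close>
definition carnot_morphism_Fn ::
  "('a::euclidean_space \<Rightarrow> 'a \<Rightarrow> 'b::euclidean_space) \<Rightarrow>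
   (('n::{finite,linorder}) form \<Rightarrow> 'a) \<Rightarrow> ('n form \<Rightarrow> 'b) \<Rightarrow> bool" where
  "carnot_morphism_Fn br p1 p2 \<longleftrightarrow> linear p1 \<and> linear p2 \<and>
     (\<forall>\<theta>\<in>Lam 1. \<forall>\<theta>'\<in>Lam 1. p2 (\<theta> \<and>\<^sub>w \<theta>') = br (p1 \<theta>) (p1 \<theta>'))"

definition surjective_Fn :: "(('n::{finite,linorder}) form \<Rightarrow> 'a) \<Rightarrow> ('n form \<Rightarrow> 'b) \<Rightarrow> bool" where
  "surjective_Fn p1 p2 \<longleftrightarrow> p1 ` Lam 1 = UNIV \<and> p2 ` Lam 2 = UNIV"

definition ker_Fn :: "(('n::{finite,linorder}) form \<Rightarrow> 'a::zero) \<Rightarrow> ('n form \<Rightarrow> 'b::zero)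
     \<Rightarrow> ('n form \<times> 'n form) set" where
  "ker_Fn p1 p2 = {(\<theta>, \<omega>). \<theta> \<in> Lam 1 \<and> \<omega> \<in> Lam 2 \<and> p1 \<theta> = 0 \<and> p2 \<omega> = 0}"

definition Anh12 :: "('n::{finite,linorder}) form \<Rightarrow> ('n form \<times> 'n form) set" where
  "Anh12 \<eta> = {(\<theta>, \<omega>). \<theta> \<in> Lam 1 \<and> \<omega> \<in> Lam 2 \<and> \<theta> \<and>\<^sub>w \<eta> = 0 \<and> \<omega> \<and>\<^sub>w \<eta> = 0}"

definition Lam_pi :: "nat \<Rightarrow> (('n::{finite,linorder}) form \<Rightarrow> 'a::zero) \<Rightarrow> ('n form \<Rightarrow> 'b::zero)
     \<Rightarrow> 'n form set" where
  "Lam_pi k p1 p2 = {\<eta> \<in> Lam k. ker_Fn p1 p2 \<subseteq> Anh12 \<eta>}"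

definition affine_maps :: "('v::real_vector \<Rightarrow> real) set" where
  "affine_maps = {f. \<exists>l c. linear l \<and> (\<forall>p. f p = l p + c)}"

definition iso_funs_forms :: "('v \<Rightarrow> real) set \<Rightarrow> ('n::{finite,linorder}) form set \<Rightarrow> bool" where
  "iso_funs_forms A D \<longleftrightarrow> (\<exists>\<Phi>. bij_betw \<Phi> A D \<and>
     (\<forall>f\<in>A. \<forall>g\<in>A. \<Phi> (\<lambda>p. f p + g p) = \<Phi> f + \<Phi> g) \<and>
     (\<forall>f\<in>A. \<forall>c::real. \<Phi> (\<lambda>p. c * f p) = c *\<^sub>R \<Phi> f))"

end

theory Submission
  imports Defs
begin

text \<open>Write \<open>n = CARD('n)\<close>. The top coefficient of \<open>\<alpha> \<and>\<^sub>w \<eta>\<close> is a perfect pairing between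
\<open>\<Lambda>\<^sup>k\<close> and \<open>\<Lambda>\<^sup>n\<^sup>-\<^sup>k\<close>. Every condition defining \<open>\<Lambda>\<^sup>n(\<pi>)\<close> is void, so it is the line \<open>\<Lambda>\<^sup>n\<close>.
In degree \<open>n - 1\<close> only the condition from \<open>ker \<pi>\<^sub>1\<close> survives, so \<open>\<Lambda>\<^sup>n\<^sup>-\<^sup>1(\<pi>)\<close> is the
annihilator of \<open>ker \<pi>\<^sub>1 \<subseteq> \<Lambda>\<^sup>1\<close>, of dimension \<open>rank \<pi>\<^sub>1 = dim V\<^sub>1\<close>. In degree \<open>n - 2\<close> the condition
from \<open>ker \<pi>\<^sub>1\<close> follows from the one from \<open>ker \<pi>\<^sub>2\<close>: for \<open>\<theta> \<in> ker \<pi>\<^sub>1\<close> every \<open>\<theta> \<and> e\<^sub>j\<close> lies in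
\<open>ker \<pi>\<^sub>2\<close>, because \<open>\<pi>\<^sub>2(\<theta> \<and> e\<^sub>j) = [\<pi>\<^sub>1 \<theta>, \<pi>\<^sub>1 e\<^sub>j] = 0\<close>, and the coefficients of \<open>\<theta> \<and> \<eta>\<close> are up
to sign the top coefficients of \<open>(\<theta> \<and> e\<^sub>j) \<and> \<eta>\<close>. Hence \<open>\<Lambda>\<^sup>n\<^sup>-\<^sup>2(\<pi>)\<close> is the annihilator of
\<open>ker \<pi>\<^sub>2\<close>, of dimension \<open>dim V\<^sub>2\<close>. Forms of distinct degrees are independent, so the sum has
dimension \<open>dim V\<^sub>1 + dim V\<^sub>2 + 1\<close>, which is the dimension of the affine maps on \<open>V\<^sub>1 \<times> V\<^sub>2\<close>.\<close>

lemma wedge_nth: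
  "(\<alpha> \<and>\<^sub>w \<beta>) $ S = (\<Sum>I\<in>Pow S. shuffle_sign I (S - I) * \<alpha> $ I * \<beta> $ (S - I))"
  by (simp add: wedge_def)

lemma linear_wedge_right: "linear (\<lambda>\<beta>. \<alpha> \<and>\<^sub>w \<beta>)"
  by (rule linearI) (simp_all add: vec_eq_iff wedge_nth algebra_simps sum.distrib sum_distrib_left)

lemma wedge_zero_right [simp]: "\<alpha> \<and>\<^sub>w 0 = 0"
  using linear_0[OF linear_wedge_right] .

lemma wedge_axis_right:
  "(\<alpha> \<and>\<^sub>w axis J 1) $ S = (if J \<subseteq> S then shuffle_sign (S - J) J * \<alpha> $ (S - J) else 0)"
proof -
  have "(\<alpha> \<and>\<^sub>w axis J 1) $ S =
      (\<Sum>I\<in>Pow S. if I = S - J \<and> J \<subseteq> S then shuffle_sign I (S - I) * \<alpha> $ I else 0)"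
    unfolding wedge_nth axis_def by (intro sum.cong) auto
  then show ?thesis
    by (auto simp: double_diff)
qed

subsection \<open>Homogeneous forms\<close>

lemma subspace_Lam: "subspace (Lam k)"
  by (auto simp: subspace_def Lam_def)

lemma zero_in_Lam [simp]: "0 \<in> Lam k"
  by (simp add: Lam_def)

lemma axis_singleton_in_Lam_1: "axis {j} 1 \<in> Lam 1"
  by (auto simp: Lam_def axis_def)

lemma wedge_in_Lam:
  assumes "\<alpha> \<in> Lam a" "\<beta> \<in> Lam b"
  shows "\<alpha> \<and>\<^sub>w \<beta> \<in> Lam (a + b)"
  unfolding Lam_def
proof (intro CollectI allI impI)
  fix S :: "'a set"
  assume S: "card S \<noteq> a + b"
  have "shuffle_sign I (S - I) * \<alpha> $ I * \<beta> $ (S - I) = 0" if "I \<subseteq> S" for I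
  proof (cases "\<alpha> $ I = 0 \<or> \<beta> $ (S - I) = 0")
    case False
    then have "card I = a" "card (S - I) = b"
      using assms by (auto simp: Lam_def)
    moreover have "card I \<le> card S"
      using that by (simp add: card_mono)
    ultimately show ?thesis
      using S that by (simp add: card_Diff_subset)
  qed auto
  then show "(\<alpha> \<and>\<^sub>w \<beta>) $ S = 0"
    unfolding wedge_nth by (intro sum.neutral) blast
qed

lemma Lam_eq_zero_above_top:
  assumes "x \<in> Lam m" "m > CARD('n)"
  shows "x = (0 :: 'n::{finite,linorder} form)"
proof -
  have "x $ S = 0" for S
    using assms card_mono[OF _ subset_UNIV, of S] by (auto simp: Lam_def)
  then show ?thesis
    by (simp add: vec_eq_iff)
qed

lemma Lam_top_eq_zero_iff:
  assumes "x \<in> Lam CARD('n)"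
  shows "x = 0 \<longleftrightarrow> x $ (UNIV :: 'n::{finite,linorder} set) = 0"
proof
  assume "x $ UNIV = 0"
  moreover have "x $ S = 0" if "S \<noteq> UNIV" for S
    using assms that card_eq_UNIV_imp_eq_UNIV[of S] by (auto simp: Lam_def)
  ultimately show "x = 0"
    by (metis vec_eq_iff zero_index)
qed simp

lemma wedge_into_top_eq_zero_iff:
  assumes "\<alpha> \<in> Lam k" "\<eta> \<in> Lam (CARD('n) - k)" "k \<le> CARD('n)"
  shows "\<alpha> \<and>\<^sub>w \<eta> = 0 \<longleftrightarrow> (\<alpha> \<and>\<^sub>w \<eta>) $ (UNIV :: 'n::{finite,linorder} set) = 0"
  using Lam_top_eq_zero_iff wedge_in_Lam[OF assms(1,2)] assms(3) by simp

lemma Lam_top_eq_span: "Lam CARD('n) = span {axis (UNIV :: 'n::{finite,linorder} set) 1}"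
proof -
  have "x = (x $ UNIV) *\<^sub>R axis UNIV 1" if "x \<in> Lam CARD('n)" for x :: "'n form"
  proof -
    have "x $ S = 0" if "S \<noteq> UNIV" for S
      using \<open>x \<in> Lam CARD('n)\<close> that card_eq_UNIV_imp_eq_UNIV[of S] by (auto simp: Lam_def)
    then show ?thesis
      by (auto simp: vec_eq_iff axis_def)
  qed
  then show ?thesis
    by (auto simp: span_singleton Lam_def axis_def)
qed

lemma dim_Lam_top: "dim (Lam CARD('n) :: 'n::{finite,linorder} form set) = 1"
  by (simp add: Lam_top_eq_span dim_span axis_eq_0_iff)

lemma Lam_add_eq_zero_if_distinct_degrees:
  assumes "a \<in> Lam i" "b \<in> Lam j" "a + b \<in> Lam k" "i \<noteq> k" "j \<noteq> k"
  shows "a + b = 0"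
  using assms by (fastforce simp: Lam_def vec_eq_iff)

lemma subspace_sums3:
  assumes "subspace A" "subspace B" "subspace C"
  shows "subspace {a + b + c | a b c. a \<in> A \<and> b \<in> B \<and> c \<in> C}"
proof -
  have "{a + b + c | a b c. a \<in> A \<and> b \<in> B \<and> c \<in> C} =
      {x + c | x c. x \<in> {a + b | a b. a \<in> A \<and> b \<in> B} \<and> c \<in> C}"
    by blast
  then show ?thesis
    using subspace_sums[OF subspace_sums[OF assms(1,2)] assms(3)] by simp
qed

lemma dim_sums_of_distinct_degrees:
  assumes "subspace A" "subspace B" "subspace C"
    and "A \<subseteq> Lam i" "B \<subseteq> Lam j" "C \<subseteq> Lam k" "i \<noteq> j" "i \<noteq> k" "j \<noteq> k"
  shows "dim {a + b + c | a b c. a \<in> A \<and> b \<in> B \<and> c \<in> C} = dim A + dim B + dim C"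
proof -
  define AB where "AB = {a + b | a b. a \<in> A \<and> b \<in> B}"
  have "subspace AB"
    unfolding AB_def by (rule subspace_sums[OF assms(1,2)])
  have "dim (A \<inter> B) = 0"
    using assms Lam_add_eq_zero_if_distinct_degrees[of _ i 0 i j] by fastforce
  then have "dim AB = dim A + dim B"
    using dim_sums_Int[OF assms(1,2)] unfolding AB_def by linarith
  moreover have "dim (AB \<inter> C) = 0"
    using assms Lam_add_eq_zero_if_distinct_degrees[of _ i _ j k] unfolding AB_def by fastforce
  moreover have "{a + b + c | a b c. a \<in> A \<and> b \<in> B \<and> c \<in> C} = {x + c | x c. x \<in> AB \<and> c \<in> C}"
    unfolding AB_def by blast
  ultimately show ?thesis
    using dim_sums_Int[OF \<open>subspace AB\<close> assms(3)] by (simp del: dim_eq_0)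
qed

lemma shuffle_sign_square: "shuffle_sign I J * shuffle_sign I J = 1"
  by (simp add: shuffle_sign_def flip: power_add)

lemma shuffle_sign_singleton: "shuffle_sign {i} J = (-1) ^ card {b\<in>J. b < i}"
proof -
  have "{(a, b). a \<in> {i} \<and> b \<in> J \<and> b < a} = Pair i ` {b\<in>J. b < i}"
    by auto
  then show ?thesis
    by (simp add: shuffle_sign_def card_image inj_on_def)
qed

lemma shuffle_sign_Un_left:
  assumes "A \<inter> B = {}"
  shows "shuffle_sign (A \<union> B) (J :: 'n::{finite,linorder} set) = shuffle_sign A J * shuffle_sign B J"
proof -
  have "{(a, b). a \<in> A \<union> B \<and> b \<in> J \<and> b < a} =
      {(a, b). a \<in> A \<and> b \<in> J \<and> b < a} \<union> {(a, b). a \<in> B \<and> b \<in> J \<and> b < a}"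
    by auto
  moreover have "card \<dots> =
      card {(a, b). a \<in> A \<and> b \<in> J \<and> b < a} + card {(a, b). a \<in> B \<and> b \<in> J \<and> b < a}"
    by (rule card_Un_disjoint) (use assms in auto)
  ultimately show ?thesis
    by (simp add: shuffle_sign_def power_add)
qed

lemma shuffle_sign_pair:
  fixes i j :: "'n::{finite,linorder}"
  assumes "i \<noteq> j"
  shows "shuffle_sign {i} (- {j, i}) =
    - ((-1) ^ card {b. b < j}) * shuffle_sign {j, i} (- {j, i}) * shuffle_sign {i} {j}"
proof -
  define R where "R = - {j, i}"
  have "shuffle_sign {j, i} R = shuffle_sign {j} R * shuffle_sign {i} R"
    using shuffle_sign_Un_left[of "{j}" "{i}" R] assms by (simp add: insert_commute)
  moreover have "- ((-1) ^ card {b. b < j}) * shuffle_sign {j} R * shuffle_sign {i} {j} = 1"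
  proof (cases "i < j")
    case True
    then have "{b. b < j} = insert i {b\<in>R. b < j}" "i \<notin> {b\<in>R. b < j}" "{b\<in>{j}. b < i} = {}"
      by (auto simp: R_def)
    then show ?thesis
      by (simp only: shuffle_sign_singleton) (simp flip: power_add)
  next
    case False
    then have "{b. b < j} = {b\<in>R. b < j}" "{b\<in>{j}. b < i} = {j}"
      using assms by (auto simp: R_def)
    then show ?thesis
      by (simp only: shuffle_sign_singleton) (simp flip: power_add)
  qed
  ultimately show ?thesis
    unfolding R_def[symmetric] by (simp add: algebra_simps)
qed

text \<open>In both coefficient sums only the terms carrying a coefficient \<open>\<theta> $ {i}\<close>, \<open>i \<noteq> j\<close>, survive,
and they match termwise by \<open>shuffle_sign_pair\<close>.\<close>

lemma wedge_nth_Compl_singleton: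
  fixes \<theta> \<eta> :: "'n::{finite,linorder} form"
  assumes "\<theta> \<in> Lam 1"
  shows "(\<theta> \<and>\<^sub>w \<eta>) $ (- {j}) = - ((-1) ^ card {b. b < j}) * ((\<theta> \<and>\<^sub>w axis {j} 1) \<and>\<^sub>w \<eta>) $ UNIV"
proof -
  define c :: real where "c = - ((-1) ^ card {b. b < j})"
  define g where "g I = shuffle_sign I (UNIV - I) * (\<theta> \<and>\<^sub>w axis {j} 1) $ I * \<eta> $ (UNIV - I)" for I
  have "((\<theta> \<and>\<^sub>w axis {j} 1) \<and>\<^sub>w \<eta>) $ UNIV = (\<Sum>I\<in>UNIV. g I)"
    by (simp add: wedge_nth g_def)
  also have "\<dots> = (\<Sum>I\<in>insert j ` Pow (- {j}). g I)"
  proof (rule sum.mono_neutral_right)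
    show "\<forall>I\<in>UNIV - insert j ` Pow (- {j}). g I = 0"
    proof
      fix I
      assume I: "I \<in> UNIV - insert j ` Pow (- {j})"
      have "j \<notin> I"
      proof
        assume "j \<in> I"
        then have "I = insert j (I - {j})" "I - {j} \<in> Pow (- {j})"
          by auto
        with I show False
          by blast
      qed
      then show "g I = 0"
        by (simp add: g_def wedge_axis_right)
    qed
  qed auto
  also have "\<dots> = (\<Sum>A\<in>Pow (- {j}). g (insert j A))"
    by (subst sum.reindex) (auto simp: inj_on_def)
  finally have top: "((\<theta> \<and>\<^sub>w axis {j} 1) \<and>\<^sub>w \<eta>) $ UNIV = (\<Sum>A\<in>Pow (- {j}). g (insert j A))" .
  have "shuffle_sign A (- {j} - A) * \<theta> $ A * \<eta> $ (- {j} - A) = c * g (insert j A)"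
    if "A \<in> Pow (- {j})" for A
  proof (cases "\<theta> $ A = 0")
    case True
    have "insert j A - {j} = A"
      using that by auto
    with True show ?thesis
      by (simp add: g_def wedge_axis_right)
  next
    case False
    then obtain i where "A = {i}"
      using assms by (auto simp: Lam_def card_1_singleton_iff)
    moreover have "i \<noteq> j"
      using that \<open>A = {i}\<close> by auto
    moreover have "- {j} - {i} = - {j, i}" "UNIV - {j, i} = - {j, i}" "{j, i} - {j} = {i}"
      using \<open>i \<noteq> j\<close> by auto
    ultimately show ?thesis
      using shuffle_sign_pair[of i j] by (simp add: g_def c_def wedge_axis_right)
  qed
  then have "(\<theta> \<and>\<^sub>w \<eta>) $ (- {j}) = (\<Sum>A\<in>Pow (- {j}). c * g (insert j A))"
    unfolding wedge_nth by (rule sum.cong[OF refl])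
  then show ?thesis
    by (simp add: top c_def sum_distrib_left)
qed

subsection \<open>The top-degree pairing\<close>

definition top_dual :: "nat \<Rightarrow> ('n::{finite,linorder}) form \<Rightarrow> 'n form" where
  "top_dual k \<eta> = (\<chi> I. if card I = k then shuffle_sign I (- I) * \<eta> $ (- I) else 0)"

lemma linear_top_dual: "linear (top_dual k)"
  by (rule linearI) (simp_all add: top_dual_def vec_eq_iff algebra_simps)

lemma top_dual_in_Lam: "top_dual k \<eta> \<in> Lam k"
  by (simp add: top_dual_def Lam_def)

lemma top_coeff_wedge_eq_inner_top_dual:
  assumes "\<alpha> \<in> Lam k"
  shows "(\<alpha> \<and>\<^sub>w \<eta>) $ UNIV = \<alpha> \<bullet> top_dual k \<eta>"
  unfolding wedge_nth inner_vec_def top_dual_def Pow_UNIV Compl_eq_Diff_UNIV[symmetric]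
  by (intro sum.cong refl) (use assms in \<open>auto simp: Lam_def\<close>)

lemma card_Compl_eq: "card (- (A :: 'n::finite set)) = CARD('n) - card A"
  by (simp add: Compl_eq_Diff_UNIV card_Diff_subset)

lemma bij_betw_top_dual:
  assumes "k \<le> CARD('n)"
  shows "bij_betw (top_dual k) (Lam (CARD('n) - k)) (Lam k :: 'n::{finite,linorder} form set)"
proof (rule bij_betw_byWitness)
  define \<psi> :: "'n form \<Rightarrow> 'n form" where
    "\<psi> v = (\<chi> J. if card J = CARD('n) - k then shuffle_sign (- J) J * v $ (- J) else 0)" for v
  show "\<forall>\<eta>\<in>Lam (CARD('n) - k). \<psi> (top_dual k \<eta>) = \<eta>"
    using assms shuffle_sign_square
    by (auto simp: vec_eq_iff \<psi>_def top_dual_def Lam_def card_Compl_eq mult.assoc[symmetric])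
  show "\<forall>v\<in>Lam k. top_dual k (\<psi> v) = v"
    using assms shuffle_sign_square
    by (auto simp: vec_eq_iff \<psi>_def top_dual_def Lam_def card_Compl_eq mult.assoc[symmetric])
  show "\<psi> ` Lam k \<subseteq> Lam (CARD('n) - k)"
    by (auto simp: \<psi>_def Lam_def)
qed (use top_dual_in_Lam in blast)

definition top_annihilator :: "nat \<Rightarrow> ('n::{finite,linorder}) form set \<Rightarrow> 'n form set" where
  "top_annihilator k A = {\<eta> \<in> Lam (CARD('n) - k). \<forall>\<alpha>\<in>A. (\<alpha> \<and>\<^sub>w \<eta>) $ UNIV = 0}"

lemma subspace_top_annihilator: "subspace (top_annihilator k A)"
  using subspace_Lam[of "CARD('n) - k"]
  by (auto simp: subspace_def top_annihilator_def linear_add[OF linear_wedge_right]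
      linear_scale[OF linear_wedge_right])

lemma dim_top_annihilator:
  fixes A :: "('n::{finite,linorder}) form set"
  assumes "subspace A" "A \<subseteq> Lam k" "k \<le> CARD('n)"
  shows "dim (top_annihilator k A) + dim A = dim (Lam k :: 'n form set)"
proof -
  have bij: "bij_betw (top_dual k) (Lam (CARD('n) - k)) (Lam k :: 'n form set)"
    using bij_betw_top_dual[OF assms(3)] .
  have "top_dual k ` top_annihilator k A = {v \<in> Lam k. \<forall>\<alpha>\<in>A. orthogonal \<alpha> v}"
  proof -
    have "(\<alpha> \<and>\<^sub>w \<eta>) $ UNIV = \<alpha> \<bullet> top_dual k \<eta>" if "\<alpha> \<in> A" for \<alpha> \<eta>
      using assms(2) that top_coeff_wedge_eq_inner_top_dual by blast
    then have "top_annihilator k A = {\<eta> \<in> Lam (CARD('n) - k). top_dual k \<eta> \<in> {v. \<forall>\<alpha>\<in>A. orthogonal \<alpha> v}}"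
      by (auto simp: top_annihilator_def orthogonal_def)
    then show ?thesis
      using bij by (auto simp: bij_betw_def)
  qed
  moreover have "inj_on (top_dual k) (span (top_annihilator k A))"
  proof -
    have "span (top_annihilator k A) = top_annihilator k A"
      using subspace_top_annihilator span_eq_iff by blast
    moreover have "top_annihilator k A \<subseteq> Lam (CARD('n) - k)"
      by (auto simp: top_annihilator_def)
    ultimately show ?thesis
      using bij by (metis bij_betw_def inj_on_subset)
  qed
  ultimately have "dim {v \<in> Lam k. \<forall>\<alpha>\<in>A. orthogonal \<alpha> v} = dim (top_annihilator k A)"
    using dim_image_eq[OF linear_top_dual] by metis
  then show ?thesis
    using dim_subspace_orthogonal_to_vectors[OF assms(1) subspace_Lam assms(2)] by simp
qed

lemma dim_kernel_add_dim_image: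
  fixes p :: "'a::euclidean_space \<Rightarrow> 'b::euclidean_space"
  assumes "linear p" "subspace L"
  shows "dim {x\<in>L. p x = 0} + dim (p ` L) = dim L"
proof -
  define K where "K = {x\<in>L. p x = 0}"
  define C where "C = {y\<in>L. \<forall>x\<in>K. orthogonal x y}"
  have "subspace K"
    using assms by (auto simp: K_def subspace_def linear_add linear_scale linear_0)
  have "subspace C"
    using assms(2) by (auto simp: C_def subspace_def orthogonal_def inner_add_right)
  have "p ` L \<subseteq> p ` C"
  proof
    fix z assume "z \<in> p ` L"
    then obtain x where "x \<in> L" "z = p x"
      by auto
    obtain y w where "y \<in> span K" and w_orth: "\<And>u. u \<in> span K \<Longrightarrow> orthogonal w u"
      and "x = y + w"
      using orthogonal_subspace_decomp_exists[of K x] by metis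
    have "y \<in> K"
      using \<open>y \<in> span K\<close> \<open>subspace K\<close> by (metis span_eq_iff)
    have "w = x - y"
      using \<open>x = y + w\<close> by simp
    then have "w \<in> L" "p w = z"
      using \<open>x \<in> L\<close> \<open>y \<in> K\<close> \<open>z = p x\<close> assms
      by (auto simp: K_def subspace_diff linear_diff)
    moreover have "w \<in> C"
      unfolding C_def using \<open>w \<in> L\<close> w_orth span_base orthogonal_commute by blast
    ultimately show "z \<in> p ` C"
      by blast
  qed
  then have "p ` C = p ` L"
    by (auto simp: C_def)
  moreover have "inj_on p (span C)"
  proof -
    have "inj_on p C"
      using linear_inj_on_iff_eq_0[OF assms(1) \<open>subspace C\<close>] by (auto simp: C_def K_def orthogonal_def)
    then show ?thesis
      using \<open>subspace C\<close> span_eq_iff by metis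
  qed
  ultimately have "dim (p ` L) = dim C"
    using dim_image_eq[OF assms(1)] by metis
  moreover have "dim C + dim K = dim L"
    unfolding C_def by (rule dim_subspace_orthogonal_to_vectors[OF \<open>subspace K\<close> assms(2)])
      (auto simp: K_def)
  ultimately show ?thesis
    by (simp add: K_def)
qed

lemma dim_top_annihilator_kernel:
  fixes p :: "('n::{finite,linorder}) form \<Rightarrow> 'b::euclidean_space"
  assumes "linear p" "k \<le> CARD('n)"
  shows "dim (top_annihilator k {\<alpha> \<in> Lam k. p \<alpha> = 0}) = dim (p ` Lam k)"
proof -
  define K where "K = {\<alpha> \<in> Lam k. p \<alpha> = 0}"
  have "subspace K"
    using subspace_Lam[of k] assms(1) by (auto simp: K_def subspace_def linear_add linear_scale linear_0)
  then have "dim (top_annihilator k K) + dim K = dim (Lam k :: 'n form set)"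
    using dim_top_annihilator[OF _ _ assms(2)] by (auto simp: K_def)
  moreover have "dim K + dim (p ` Lam k) = dim (Lam k :: 'n form set)"
    unfolding K_def by (rule dim_kernel_add_dim_image[OF assms(1) subspace_Lam])
  ultimately show ?thesis
    unfolding K_def by linarith
qed

subsection \<open>The spaces \<open>\<Lambda>\<^sup>k(\<pi>)\<close> in top degrees\<close>

lemma Lam_pi_eq:
  assumes "linear p1" "linear p2"
  shows "Lam_pi k p1 p2 = {\<eta>\<in>Lam k. (\<forall>\<theta>\<in>Lam 1. p1 \<theta> = 0 \<longrightarrow> \<theta> \<and>\<^sub>w \<eta> = 0) \<and>
                                     (\<forall>\<omega>\<in>Lam 2. p2 \<omega> = 0 \<longrightarrow> \<omega> \<and>\<^sub>w \<eta> = 0)}"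
proof -
  have "ker_Fn p1 p2 \<subseteq> Anh12 \<eta> \<longleftrightarrow> (\<forall>\<theta>\<in>Lam 1. p1 \<theta> = 0 \<longrightarrow> \<theta> \<and>\<^sub>w \<eta> = 0) \<and>
                                     (\<forall>\<omega>\<in>Lam 2. p2 \<omega> = 0 \<longrightarrow> \<omega> \<and>\<^sub>w \<eta> = 0)" for \<eta>
  proof
    assume "ker_Fn p1 p2 \<subseteq> Anh12 \<eta>"
    moreover have "(\<theta>, 0) \<in> ker_Fn p1 p2" if "\<theta> \<in> Lam 1" "p1 \<theta> = 0" for \<theta>
      using that linear_0[OF assms(2)] by (simp add: ker_Fn_def)
    moreover have "(0, \<omega>) \<in> ker_Fn p1 p2" if "\<omega> \<in> Lam 2" "p2 \<omega> = 0" for \<omega>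
      using that linear_0[OF assms(1)] by (simp add: ker_Fn_def)
    ultimately show "(\<forall>\<theta>\<in>Lam 1. p1 \<theta> = 0 \<longrightarrow> \<theta> \<and>\<^sub>w \<eta> = 0) \<and> (\<forall>\<omega>\<in>Lam 2. p2 \<omega> = 0 \<longrightarrow> \<omega> \<and>\<^sub>w \<eta> = 0)"
      by (auto simp: Anh12_def)
  qed (auto simp: ker_Fn_def Anh12_def)
  then show ?thesis
    by (auto simp: Lam_pi_def)
qed

lemma subspace_Lam_pi:
  assumes "linear p1" "linear p2"
  shows "subspace (Lam_pi k p1 p2)"
  unfolding Lam_pi_eq[OF assms] using subspace_Lam[of k]
  by (auto simp: subspace_def linear_add[OF linear_wedge_right] linear_scale[OF linear_wedge_right])

lemma Lam_pi_top:
  assumes "linear p1" "linear p2"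
  shows "Lam_pi CARD('n) p1 p2 = (Lam CARD('n) :: ('n::{finite,linorder}) form set)"
proof -
  have "\<theta> \<and>\<^sub>w \<eta> = 0" if "\<theta> \<in> Lam 1" "\<eta> \<in> Lam CARD('n)" for \<theta> \<eta> :: "'n form"
    using Lam_eq_zero_above_top[OF wedge_in_Lam[OF that]] by simp
  moreover have "\<omega> \<and>\<^sub>w \<eta> = 0" if "\<omega> \<in> Lam 2" "\<eta> \<in> Lam CARD('n)" for \<omega> \<eta> :: "'n form"
    using Lam_eq_zero_above_top[OF wedge_in_Lam[OF that]] by simp
  ultimately show ?thesis
    by (auto simp: Lam_pi_eq[OF assms])
qed

lemma Lam_pi_codim_1:
  fixes p1 :: "('n::{finite,linorder}) form \<Rightarrow> 'a::real_vector" and p2 :: "'n form \<Rightarrow> 'b::real_vector"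
  assumes "linear p1" "linear p2"
  shows "Lam_pi (CARD('n) - 1) p1 p2 = top_annihilator 1 {\<theta> \<in> Lam 1. p1 \<theta> = 0}"
proof -
  have "\<omega> \<and>\<^sub>w \<eta> = 0" if "\<omega> \<in> Lam 2" "\<eta> \<in> Lam (CARD('n) - 1)" for \<omega> \<eta> :: "'n form"
    using Lam_eq_zero_above_top[OF wedge_in_Lam[OF that]] by simp
  moreover have "\<theta> \<and>\<^sub>w \<eta> = 0 \<longleftrightarrow> (\<theta> \<and>\<^sub>w \<eta>) $ UNIV = 0"
    if "\<theta> \<in> Lam 1" "\<eta> \<in> Lam (CARD('n) - 1)" for \<theta> \<eta> :: "'n form"
    using wedge_into_top_eq_zero_iff[OF that] by simp
  ultimately show ?thesis
    by (auto simp: Lam_pi_eq[OF assms] top_annihilator_def)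
qed

lemma wedge_eq_zero_if_in_top_annihilator_kernel:
  fixes \<eta> :: "'n::{finite,linorder} form"
  assumes "carnot_morphism_Fn br p1 p2" "bilinear br" "CARD('n) \<ge> 2"
    and "\<eta> \<in> top_annihilator 2 {\<omega> \<in> Lam 2. p2 \<omega> = 0}"
    and "\<theta> \<in> Lam 1" "p1 \<theta> = 0"
  shows "\<theta> \<and>\<^sub>w \<eta> = 0"
proof -
  have "1 + (CARD('n) - 2) = CARD('n) - 1"
    using assms(3) by simp
  then have "\<theta> \<and>\<^sub>w \<eta> \<in> Lam (CARD('n) - 1)"
    using wedge_in_Lam[OF assms(5), of \<eta> "CARD('n) - 2"] assms(4)
    by (simp add: top_annihilator_def)
  moreover have "(\<theta> \<and>\<^sub>w \<eta>) $ (- {j}) = 0" for j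
  proof -
    have "\<theta> \<and>\<^sub>w axis {j} 1 \<in> Lam 2"
      using wedge_in_Lam[OF assms(5) axis_singleton_in_Lam_1] by (simp add: numeral_2_eq_2)
    moreover have "p2 (\<theta> \<and>\<^sub>w axis {j} 1) = 0"
      using assms(1,2,5,6) axis_singleton_in_Lam_1[of j] bilinear_lzero
      by (simp add: carnot_morphism_Fn_def)
    ultimately show ?thesis
      using assms(4,5) by (simp add: top_annihilator_def wedge_nth_Compl_singleton)
  qed
  moreover have "\<exists>j. S = - {j}" if "card S = CARD('n) - 1" for S :: "'n set"
  proof -
    have "card (- S) = 1"
      using card_Compl_eq[of S] that assms(3) by simp
    then obtain j where "- S = {j}"
      by (auto simp: card_1_singleton_iff)
    then show ?thesis
      by (metis double_compl)
  qed
  ultimately have "(\<theta> \<and>\<^sub>w \<eta>) $ S = 0" for S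
    unfolding Lam_def by blast
  then show ?thesis
    by (simp add: vec_eq_iff)
qed

lemma Lam_pi_codim_2:
  fixes p1 :: "('n::{finite,linorder}) form \<Rightarrow> 'a::euclidean_space"
    and p2 :: "'n form \<Rightarrow> 'b::euclidean_space"
  assumes "carnot_morphism_Fn br p1 p2" "bilinear br" "CARD('n) \<ge> 2"
  shows "Lam_pi (CARD('n) - 2) p1 p2 = top_annihilator 2 {\<omega> \<in> Lam 2. p2 \<omega> = 0}"
proof -
  have "linear p1" "linear p2"
    using assms(1) by (auto simp: carnot_morphism_Fn_def)
  show ?thesis
    using wedge_into_top_eq_zero_iff[of _ 2] assms(3)
      wedge_eq_zero_if_in_top_annihilator_kernel[OF assms]
    by (auto simp: Lam_pi_eq[OF \<open>linear p1\<close> \<open>linear p2\<close>] top_annihilator_def)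
qed

lemma CARD_ge_2_if_Lam_2_onto:
  fixes p :: "('n::{finite,linorder}) form \<Rightarrow> 'b::euclidean_space"
  assumes "linear p" "p ` Lam 2 = UNIV"
  shows "CARD('n) \<ge> 2"
proof (rule ccontr)
  assume "\<not> CARD('n) \<ge> 2"
  then have "p ` Lam 2 \<subseteq> {0}"
    using Lam_eq_zero_above_top[where 'n='n and m=2] linear_0[OF assms(1)] by auto
  moreover obtain b :: 'b where "b \<in> Basis"
    using nonempty_Basis by blast
  ultimately show False
    using assms(2) nonzero_Basis by auto
qed

subsection \<open>Affine maps\<close>

lemma affine_maps_eq_range_inner:
  "(affine_maps :: ('v::euclidean_space \<Rightarrow> real) set) = range (\<lambda>(w, c). \<lambda>p. w \<bullet> p + c)"
proof (intro set_eqI iffI)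
  fix g :: "'v \<Rightarrow> real"
  assume "g \<in> affine_maps"
  then obtain l c where "linear l" "\<And>p. g p = l p + c"
    by (auto simp: affine_maps_def)
  then have "g = (\<lambda>p. adjoint l 1 \<bullet> p + c)"
    using adjoint_clauses(2)[OF \<open>linear l\<close>, of 1] by (simp add: fun_eq_iff)
  then show "g \<in> range (\<lambda>(w, c). \<lambda>p. w \<bullet> p + c)"
    by (intro range_eqI[of _ _ "(adjoint l 1, c)"]) simp
next
  fix g :: "'v \<Rightarrow> real"
  assume "g \<in> range (\<lambda>(w, c). \<lambda>p. w \<bullet> p + c)"
  then obtain w c where "g = (\<lambda>p. w \<bullet> p + c)"
    by auto
  moreover have "linear (\<lambda>p. w \<bullet> p)"
    by (simp add: bounded_linear.linear bounded_linear_inner_right)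
  ultimately show "g \<in> affine_maps"
    unfolding affine_maps_def by blast
qed

text \<open>As coordinates on affine maps we take the gradient \<open>\<Sum>b. (g b - g 0) b\<close> and the value at the
origin, which are visibly linear in \<open>g\<close> for the pointwise operations.\<close>

lemma iso_funs_forms_affine_maps:
  fixes D :: "('n::{finite,linorder}) form set"
  assumes "subspace D" "dim D = DIM('v::euclidean_space) + 1"
  shows "iso_funs_forms (affine_maps :: ('v \<Rightarrow> real) set) D"
proof -
  define G :: "('v \<Rightarrow> real) \<Rightarrow> 'v \<times> real" where
    "G g = ((\<Sum>b\<in>Basis. (g b - g 0) *\<^sub>R b), g 0)" for g
  define A :: "'v \<times> real \<Rightarrow> 'v \<Rightarrow> real" where
    "A = (\<lambda>(w, c). \<lambda>p. w \<bullet> p + c)"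
  have "G (A z) = z" for z
    by (cases z) (simp add: G_def A_def euclidean_representation)
  then have "bij_betw G affine_maps UNIV"
    unfolding affine_maps_eq_range_inner A_def[symmetric]
    by (intro bij_betw_byWitness[where f' = A]) auto
  moreover have "dim (UNIV :: ('v \<times> real) set) = dim D"
    using assms(2) by simp
  then obtain f :: "'v \<times> real \<Rightarrow> 'n form" where "linear f" "f ` UNIV = D" "inj f"
    using subspace_isomorphism[OF subspace_UNIV assms(1)] by blast
  then have "bij_betw f UNIV D"
    by (simp add: bij_betw_def)
  ultimately have "bij_betw (f \<circ> G) affine_maps D"
    by (rule bij_betw_trans)
  moreover have "(f \<circ> G) (\<lambda>p. g p + h p) = (f \<circ> G) g + (f \<circ> G) h" for g h
  proof -
    have "(g b + h b - (g 0 + h 0)) *\<^sub>R b = (g b - g 0) *\<^sub>R b + (h b - h 0) *\<^sub>R b" for b :: 'v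
      by (simp add: algebra_simps)
    then have "G (\<lambda>p. g p + h p) = G g + G h"
      by (simp add: G_def sum.distrib)
    then show ?thesis
      by (simp add: linear_add[OF \<open>linear f\<close>])
  qed
  moreover have "(f \<circ> G) (\<lambda>p. c * g p) = c *\<^sub>R (f \<circ> G) g" for g c
  proof -
    have "c * g b - c * g 0 = c * (g b - g 0)" for b :: 'v
      by (simp add: right_diff_distrib)
    then have "G (\<lambda>p. c * g p) = c *\<^sub>R G g"
      by (simp add: G_def scaleR_sum_right del: right_diff_distrib)
    then show ?thesis
      by (simp add: linear_scale[OF \<open>linear f\<close>])
  qed
  ultimately show ?thesis
    unfolding iso_funs_forms_def by blast
qed

theorem proposition5p10:
  fixes br :: "'a::euclidean_space \<Rightarrow> 'a \<Rightarrow> 'b::euclidean_space"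
    and p1 :: "('n::{finite,linorder}) form \<Rightarrow> 'a"
    and p2 :: "'n form \<Rightarrow> 'b"
  assumes "step2_bracket br"
    and "CARD('n) \<ge> DIM('a)"
    and "carnot_morphism_Fn br p1 p2"
    and "surjective_Fn p1 p2"
  shows "iso_funs_forms (affine_maps :: ('a \<times> 'b \<Rightarrow> real) set)
           {a + b + c | a b c. a \<in> Lam_pi (CARD('n) - 2) p1 p2 \<and>
                               b \<in> Lam_pi (CARD('n) - 1) p1 p2 \<and> c \<in> Lam_pi (CARD('n)) p1 p2}"
proof -
  let ?U = "\<lambda>k. Lam_pi k p1 p2"
  have "bilinear br"
    using assms(1) by (simp add: step2_bracket_def)
  have "linear p1" "linear p2"
    using assms(3) by (simp_all add: carnot_morphism_Fn_def)
  have "p1 ` Lam 1 = UNIV" "p2 ` Lam 2 = UNIV"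
    using assms(4) by (simp_all add: surjective_Fn_def)
  have "CARD('n) \<ge> 2"
    by (rule CARD_ge_2_if_Lam_2_onto[OF \<open>linear p2\<close> \<open>p2 ` Lam 2 = UNIV\<close>])
  have "dim (?U (CARD('n) - 2)) = DIM('b)"
    unfolding Lam_pi_codim_2[OF assms(3) \<open>bilinear br\<close> \<open>CARD('n) \<ge> 2\<close>]
    using dim_top_annihilator_kernel[OF \<open>linear p2\<close> \<open>CARD('n) \<ge> 2\<close>] \<open>p2 ` Lam 2 = UNIV\<close> by simp
  moreover have "dim (?U (CARD('n) - 1)) = DIM('a)"
    unfolding Lam_pi_codim_1[OF \<open>linear p1\<close> \<open>linear p2\<close>]
    using dim_top_annihilator_kernel[OF \<open>linear p1\<close>, of 1] \<open>p1 ` Lam 1 = UNIV\<close> by simp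
  moreover have "dim (?U CARD('n)) = 1"
    by (simp add: Lam_pi_top[OF \<open>linear p1\<close> \<open>linear p2\<close>] dim_Lam_top)
  moreover have U: "subspace (?U k)" "?U k \<subseteq> Lam k" for k
    using subspace_Lam_pi[OF \<open>linear p1\<close> \<open>linear p2\<close>] by (auto simp: Lam_pi_def)
  have "dim {a + b + c | a b c. a \<in> ?U (CARD('n) - 2) \<and> b \<in> ?U (CARD('n) - 1) \<and> c \<in> ?U CARD('n)} =
      dim (?U (CARD('n) - 2)) + dim (?U (CARD('n) - 1)) + dim (?U CARD('n))"
    by (rule dim_sums_of_distinct_degrees[OF U(1) U(1) U(1) U(2) U(2) U(2)])
      (use \<open>CARD('n) \<ge> 2\<close> in auto)
  ultimately show ?thesis
    using subspace_sums3[OF U(1) U(1) U(1)] by (intro iso_funs_forms_affine_maps) simp_all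
qed

end
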